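(* Let $G$ be connected with weights $w:E\to\mathbb{R}_{>0}$ such that for every pair of vertices $a,b$ there is exactly one shortest $a$–$b$ path in $(G,w)$. Let $\pi$ be a vertex order, let $m_C$ be the output of the basic customization applied to $m_0$, and let $m_P$ be the perfect metric. Let $R$ be the set of edges $\{x,y\}$ of $G_\pi^*$ with $m_P(\{x,y\})\neq m_C(\{x,y\})$. Then (i) for all $s,t\in V$ there is an up-down $s$–$t$ path in $G_\pi^*$ that uses no edge of $R$ and whose $m_C$-length equals $\mathrm{dist}_I(s,t)$; and (ii) for every edge $\{x,y\}\notin R$ of $G_\pi^*$, the one-edge path $x,y$ is the only up-down $x$–$y$ path in $G_\pi^*$ whose $m_C$-length equals $\mathrm{dist}_I(x,y)$.
   Context: Let $G=(V,E)$ be a finite simple undirected graph with $n=|V|$ vertices. A vertex order is a bijection $\pi:\{1,\dots,n\}\to V$; the rank of $v$ is $\pi^{-1}(v)$. Contracting a vertex $v$ in a graph means deleting $v$ and its incident edges and adding an edge between every pair of former neighbors of $v$ that are not already adjacent. The core graph $G_{\pi,i}$ is obtained from $G$ by contracting $\pi(1),\dots,\pi(i-1)$ in this order. $G_\pi^*$ is the graph on $V$ whose edge set is the union of the edge sets of all $G_{\pi,i}$, $i=1,\dots,n$ (i.e. $G$ together with all edges inserted during the contractions). Let $w:E\to\mathbb{R}_{>0}$ and let $\mathrm{dist}_I(s,t)$ be the shortest $s$–$t$ path length in $(G,w)$. A metric is a map $m$ assigning to every edge of $G_\pi^*$ a value in $\mathbb{R}_{>0}\cup\{\infty\}$; the $m$-length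 of a path in $G_\pi^*$ is the sum of $m$ over its edges. An up-down path is a path $v_0,\dots,v_k$ in $G_\pi^*$ for which there is $j$ with the ranks strictly increasing along $v_0,\dots,v_j$ and strictly decreasing along $v_j,\dots,v_k$. The perfect metric is $m_P(\{x,y\})=\mathrm{dist}_I(x,y)$ for every edge $\{x,y\}$ of $G_\pi^*$. The initial metric $m_0$ is $m_0(\{x,y\})=w(\{x,y\})$ if $\{x,y\}\in E$ and $\infty$ otherwise. The basic customization starts from $m:=m_0$ and processes the edges $\{x,y\}$ of $G_\pi^*$ in nondecreasing order of the rank of the lower-ranked endpoint (ties arbitrary); when processing $\{x,y\}$ it sets, for every vertex $z$ of rank smaller than both $x$ and $y$ that is adjacent to both in $G_\pi^*$, $m(\{x,y\}):=\min\{m(\{x,y\}),m(\{x,z\})+m(\{z,y\})\}$ using the current values. Its output is the final metric $m_C$. *)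

theory Defs
  imports Main "HOL-Library.Extended_Real"
begin

definition simple_graph :: "'a set \<Rightarrow> 'a set set \<Rightarrow> bool" where
  "simple_graph V E \<longleftrightarrow> finite V \<and>
     E \<subseteq> {{x, y} | x y. x \<in> V \<and> y \<in> V \<and> x \<noteq> y}"

definition steps :: "'a list \<Rightarrow> ('a \<times> 'a) list" where
  "steps p = zip p (tl p)"

definition is_path :: "'a set \<Rightarrow> 'a set set \<Rightarrow> 'a list \<Rightarrow> bool" where
  "is_path V F p \<longleftrightarrow> p \<noteq> [] \<and> distinct p \<and> set p \<subseteq> V \<and>
     (\<forall>(a, b) \<in> set (steps p). {a, b} \<in> F)"

definition path_from_to :: "'a set \<Rightarrow> 'a set set \<Rightarrow> 'a \<Rightarrow> 'a \<Rightarrow> 'a list \<Rightarrow> bool" where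
  "path_from_to V F s t p \<longleftrightarrow> is_path V F p \<and> hd p = s \<and> last p = t"

definition connected_graph :: "'a set \<Rightarrow> 'a set set \<Rightarrow> bool" where
  "connected_graph V E \<longleftrightarrow> (\<forall>a\<in>V. \<forall>b\<in>V. \<exists>p. path_from_to V E a b p)"

definition wlen :: "('a set \<Rightarrow> real) \<Rightarrow> 'a list \<Rightarrow> real" where
  "wlen w p = sum_list (map (\<lambda>(a, b). w {a, b}) (steps p))"

definition dist_I :: "'a set \<Rightarrow> 'a set set \<Rightarrow> ('a set \<Rightarrow> real) \<Rightarrow> 'a \<Rightarrow> 'a \<Rightarrow> real" where
  "dist_I V E w s t = Inf {wlen w p | p. path_from_to V E s t p}"

definition unique_shortest_paths :: "'a set \<Rightarrow> 'a set set \<Rightarrow> ('a set \<Rightarrow> real) \<Rightarrow> bool" where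
  "unique_shortest_paths V E w \<longleftrightarrow>
     (\<forall>a\<in>V. \<forall>b\<in>V. \<exists>!p. path_from_to V E a b p \<and> wlen w p = dist_I V E w a b)"

definition vertex_order :: "'a set \<Rightarrow> (nat \<Rightarrow> 'a) \<Rightarrow> bool" where
  "vertex_order V \<pi> \<longleftrightarrow> bij_betw \<pi> {1..card V} V"

definition rank :: "'a set \<Rightarrow> (nat \<Rightarrow> 'a) \<Rightarrow> 'a \<Rightarrow> nat" where
  "rank V \<pi> v = inv_into {1..card V} \<pi> v"

text \<open>Contracting v: delete v with its incident edges, and connect all pairs of
former neighbours of v (edge sets only; the vertex set just loses v).\<close>
definition contract :: "'a set set \<Rightarrow> 'a \<Rightarrow> 'a set set" where
  "contract F v = {e \<in> F. v \<notin> e} \<union>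
     {{x, y} | x y. x \<noteq> y \<and> {v, x} \<in> F \<and> {v, y} \<in> F}"

text \<open>core_edges E pi k is the edge set of the core graph G_{pi,k+1}, i.e. after
contracting pi 1, ..., pi k in this order.\<close>
primrec core_edges :: "'a set set \<Rightarrow> (nat \<Rightarrow> 'a) \<Rightarrow> nat \<Rightarrow> 'a set set" where
  "core_edges E \<pi> 0 = E"
| "core_edges E \<pi> (Suc k) = contract (core_edges E \<pi> k) (\<pi> (Suc k))"

definition star_edges :: "'a set \<Rightarrow> 'a set set \<Rightarrow> (nat \<Rightarrow> 'a) \<Rightarrow> 'a set set" where
  "star_edges V E \<pi> = (\<Union>i\<in>{1..card V}. core_edges E \<pi> (i - 1))"

definition up_down_path :: "'a set \<Rightarrow> 'a set set \<Rightarrow> (nat \<Rightarrow> 'a) \<Rightarrow> 'a list \<Rightarrow> bool" where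
  "up_down_path V E \<pi> p \<longleftrightarrow> is_path V (star_edges V E \<pi>) p \<and>
     (\<exists>j < length p.
        (\<forall>i. i < j \<longrightarrow> rank V \<pi> (p ! i) < rank V \<pi> (p ! Suc i)) \<and>
        (\<forall>i. j \<le> i \<longrightarrow> Suc i < length p \<longrightarrow> rank V \<pi> (p ! Suc i) < rank V \<pi> (p ! i)))"

definition mlen :: "('a set \<Rightarrow> ereal) \<Rightarrow> 'a list \<Rightarrow> ereal" where
  "mlen m p = sum_list (map (\<lambda>(a, b). m {a, b}) (steps p))"

definition initial_metric :: "'a set set \<Rightarrow> ('a set \<Rightarrow> real) \<Rightarrow> 'a set \<Rightarrow> ereal" where
  "initial_metric E w e = (if e \<in> E then ereal (w e) else \<infinity>)"

text \<open>Processing one edge {x,y} in the basic customization (the minimum over all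
lower triangles; INF over the empty set is infinity).\<close>
definition cust_step :: "'a set \<Rightarrow> 'a set set \<Rightarrow> (nat \<Rightarrow> 'a) \<Rightarrow>
    ('a set \<Rightarrow> ereal) \<Rightarrow> 'a \<times> 'a \<Rightarrow> ('a set \<Rightarrow> ereal)" where
  "cust_step V E \<pi> m xy = (case xy of (x, y) \<Rightarrow>
     m({x, y} := min (m {x, y})
        (INF z \<in> {z. rank V \<pi> z < rank V \<pi> x \<and> rank V \<pi> z < rank V \<pi> y \<and>
                     {x, z} \<in> star_edges V E \<pi> \<and> {z, y} \<in> star_edges V E \<pi>}.
           m {x, z} + m {z, y})))"

definition cust_order :: "'a set \<Rightarrow> 'a set set \<Rightarrow> (nat \<Rightarrow> 'a) \<Rightarrow> ('a \<times> 'a) list \<Rightarrow> bool" where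
  "cust_order V E \<pi> L \<longleftrightarrow>
     distinct (map (\<lambda>(x, y). {x, y}) L) \<and>
     set (map (\<lambda>(x, y). {x, y}) L) = star_edges V E \<pi> \<and>
     sorted (map (\<lambda>(x, y). min (rank V \<pi> x) (rank V \<pi> y)) L)"

definition basic_customization :: "'a set \<Rightarrow> 'a set set \<Rightarrow> (nat \<Rightarrow> 'a) \<Rightarrow>
    ('a \<times> 'a) list \<Rightarrow> ('a set \<Rightarrow> ereal) \<Rightarrow> ('a set \<Rightarrow> ereal)" where
  "basic_customization V E \<pi> L m = fold (\<lambda>xy m. cust_step V E \<pi> m xy) L m"

definition wrong_edges :: "'a set \<Rightarrow> 'a set set \<Rightarrow> ('a set \<Rightarrow> real) \<Rightarrow> (nat \<Rightarrow> 'a) \<Rightarrow>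
    ('a set \<Rightarrow> ereal) \<Rightarrow> 'a set set" where
  "wrong_edges V E w \<pi> m = {{x, y} | x y. {x, y} \<in> star_edges V E \<pi> \<and>
      ereal (dist_I V E w x y) \<noteq> m {x, y}}"

end

theory Submission
  imports Defs
begin

text \<open>Call an edge \<open>{a, b}\<close> of \<open>G*\<close> correct if \<open>m_C {a, b} = dist_I a b\<close>. Every finite value
  computed by the customization is the weight of a walk in \<open>G\<close> from \<open>a\<close> to \<open>b\<close> whose interior
  lies below both ends (a lower walk), so \<open>m_C \<ge> dist_I\<close>. Conversely, the edges of the lower
  triangles of \<open>{a, b}\<close> are final when \<open>{a, b}\<close> is processed, so \<open>m_C {a, b}\<close> is at most the
  weight of every lower path; hence every segment of a shortest path whose interior lies below
  its ends yields a correct edge.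

  (i) Cutting the shortest \<open>s\<close>-\<open>t\<close> path at its highest vertex, and each half recursively at its
  highest remaining vertex, gives an up-down path of correct edges of the same length.
  (ii) Expanding the edges of an up-down \<open>x\<close>-\<open>y\<close> path of \<open>m_C\<close>-length \<open>dist_I x y\<close> into lower
  walks gives the unique shortest path, which is also the lower walk behind the correct edge
  \<open>{x, y}\<close>; so all interior vertices lie below \<open>x\<close> and \<open>y\<close>, which is impossible for an
  up-down path with an interior vertex.\<close>

section \<open>Walks and their lengths\<close>

lemma steps_Nil [simp]: "steps [] = []"
  by (simp add: steps_def)

lemma steps_single [simp]: "steps [x] = []"
  by (simp add: steps_def)

lemma steps_Cons_Cons [simp]: "steps (x # y # zs) = (x, y) # steps (y # zs)"
  by (simp add: steps_def)

lemma steps_append_Cons: "steps (xs @ y # ys) = steps (xs @ [y]) @ steps (y # ys)"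
  by (induction xs rule: induct_list012) auto

lemma steps_snoc: "xs \<noteq> [] \<Longrightarrow> steps (xs @ [y]) = steps xs @ [(last xs, y)]"
  by (induction xs rule: induct_list012) auto

lemma steps_rev: "steps (rev xs) = rev (map prod.swap (steps xs))"
proof (induction xs)
  case (Cons x xs)
  then show ?case
    using steps_snoc[of "rev xs" x] by (cases xs) (auto simp: last_rev)
qed simp

definition walk :: "'a set set \<Rightarrow> 'a list \<Rightarrow> bool" where
  "walk F W \<longleftrightarrow> (\<forall>(a, b) \<in> set (steps W). {a, b} \<in> F)"

lemma walk_single [simp]: "walk F [x]"
  by (simp add: walk_def)

lemma walk_Cons_Cons [simp]: "walk F (x # y # zs) \<longleftrightarrow> {x, y} \<in> F \<and> walk F (y # zs)"
  by (simp add: walk_def)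

lemma walk_append_Cons: "walk F (xs @ y # ys) \<longleftrightarrow> walk F (xs @ [y]) \<and> walk F (y # ys)"
  unfolding walk_def by (subst steps_append_Cons) auto

lemma walk_rev [simp]: "walk F (rev W) \<longleftrightarrow> walk F W"
  unfolding walk_def steps_rev by (auto simp: insert_commute)

lemma wlen_single [simp]: "wlen w [x] = 0"
  by (simp add: wlen_def)

lemma wlen_Cons_Cons [simp]: "wlen w (x # y # zs) = w {x, y} + wlen w (y # zs)"
  by (simp add: wlen_def)

lemma wlen_append_Cons: "wlen w (xs @ y # ys) = wlen w (xs @ [y]) + wlen w (y # ys)"
  unfolding wlen_def by (subst steps_append_Cons) auto

lemma wlen_rev [simp]: "wlen w (rev W) = wlen w W"
  unfolding wlen_def steps_rev
  by (simp add: rev_map[symmetric] sum_list_rev comp_def insert_commute case_prod_unfold)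

lemma mlen_single [simp]: "mlen m [x] = 0"
  by (simp add: mlen_def)

lemma mlen_Cons_Cons [simp]: "mlen m (x # y # zs) = m {x, y} + mlen m (y # zs)"
  by (simp add: mlen_def)

lemma mlen_append_Cons: "mlen m (xs @ y # ys) = mlen m (xs @ [y]) + mlen m (y # ys)"
  unfolding mlen_def by (subst steps_append_Cons) auto

lemma mlen_rev [simp]: "mlen m (rev W) = mlen m W"
  unfolding mlen_def steps_rev
  by (simp add: rev_map[symmetric] sum_list_rev comp_def insert_commute case_prod_unfold)

lemma mlen_snoc: "xs \<noteq> [] \<Longrightarrow> mlen m (xs @ [y]) = mlen m xs + m {last xs, y}"
  unfolding mlen_def by (simp add: steps_snoc)

lemma mlen_nonneg: "(\<And>e. 0 \<le> m e) \<Longrightarrow> 0 \<le> mlen m p"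
  unfolding mlen_def by (rule sum_list_nonneg) auto

lemma wlen_walk_nonneg: "\<forall>e\<in>F. 0 < w e \<Longrightarrow> walk F W \<Longrightarrow> 0 \<le> wlen w W"
  by (induction W rule: induct_list012) (auto simp: wlen_def add_nonneg_nonneg less_imp_le)

lemma wlen_walk_pos: "\<forall>e\<in>F. 0 < w e \<Longrightarrow> walk F W \<Longrightarrow> 2 \<le> length W \<Longrightarrow> 0 < wlen w W"
  by (induction W rule: induct_list012) (auto intro: add_pos_nonneg wlen_walk_nonneg)

text \<open>Positive weights make every closed subwalk a strict detour.\<close>
lemma walk_shortcut:
  assumes "\<forall>e\<in>F. 0 < w e" "walk F W" "\<not> distinct W"
  obtains W' where "walk F W'" "W' \<noteq> []" "set W' \<subseteq> set W" "hd W' = hd W" "last W' = last W"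
    "wlen w W' < wlen w W" "length W' < length W"
proof -
  obtain xs y ys zs where W: "W = xs @ y # (ys @ y # zs)"
    using not_distinct_decomp[OF assms(3)] by auto
  have walks: "walk F (xs @ [y])" "walk F (y # ys @ [y])" "walk F (y # zs)"
    using assms(2) walk_append_Cons[of F xs y "ys @ y # zs"] walk_append_Cons[of F "y # ys" y zs]
    unfolding W by simp_all
  have "wlen w W = wlen w (xs @ [y]) + wlen w (y # ys @ [y]) + wlen w (y # zs)"
    using wlen_append_Cons[of w xs y "ys @ y # zs"] wlen_append_Cons[of w "y # ys" y zs]
    unfolding W by simp
  moreover have "0 < wlen w (y # ys @ [y])"
    using wlen_walk_pos[OF assms(1) walks(2)] by simp
  ultimately have "wlen w (xs @ y # zs) < wlen w W"
    using wlen_append_Cons[of w xs y zs] by simp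
  moreover have "walk F (xs @ y # zs)"
    using walks walk_append_Cons[of F xs y zs] by simp
  moreover have "hd (xs @ y # zs) = hd W" "last (xs @ y # zs) = last W"
    unfolding W by (cases xs; simp)+
  ultimately show thesis
    using that[of "xs @ y # zs"] unfolding W by auto
qed

lemma walk_to_path:
  assumes "\<forall>e\<in>F. 0 < w e" "walk F W" "W \<noteq> []"
  obtains P where "walk F P" "P \<noteq> []" "distinct P" "set P \<subseteq> set W" "hd P = hd W"
    "last P = last W" "wlen w P \<le> wlen w W"
  using assms(2,3)
proof (induction "length W" arbitrary: W thesis rule: less_induct)
  case less
  show ?case
  proof (cases "distinct W")
    case False
    obtain W' where W': "walk F W'" "W' \<noteq> []" "set W' \<subseteq> set W" "hd W' = hd W" "last W' = last W"
      "wlen w W' < wlen w W" "length W' < length W"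
      using walk_shortcut[OF assms(1) less.prems(2) False] .
    show ?thesis
      by (rule less.hyps[OF W'(7) _ W'(1,2)]) (use less.prems(1) W' in fastforce)
  qed (use less.prems in blast)
qed

lemma sorted_wrt_less_imp_distinct:
  fixes f :: "'a \<Rightarrow> 'b::order"
  shows "sorted_wrt (\<lambda>a b. f a < f b) xs \<Longrightarrow> distinct xs"
  by (induction xs) auto

lemma split_at_max:
  fixes f :: "'a \<Rightarrow> 'b::linorder"
  assumes "xs \<noteq> []"
  obtains A g B where "xs = A @ g # B" "\<forall>u\<in>set xs. f u \<le> f g"
proof -
  have finite: "finite (f ` set xs)" "f ` set xs \<noteq> {}"
    using assms by auto
  obtain g where g: "g \<in> set xs" "f g = Max (f ` set xs)"
    using Max_in[OF finite] by auto
  then have "\<forall>u\<in>set xs. f u \<le> f g"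
    using finite(1) by simp
  then show thesis
    using that split_list[OF g(1)] by blast
qed

lemma up_down_ranks_append:
  fixes f :: "'a \<Rightarrow> 'b::order"
  assumes "sorted_wrt (\<lambda>a b. f a < f b) (U @ [h])" "sorted_wrt (\<lambda>a b. f b < f a) (h # D)"
  defines "p \<equiv> U @ h # D"
  shows "\<exists>j < length p. (\<forall>i. i < j \<longrightarrow> f (p ! i) < f (p ! Suc i)) \<and>
           (\<forall>i. j \<le> i \<longrightarrow> Suc i < length p \<longrightarrow> f (p ! Suc i) < f (p ! i))"
proof (intro exI[of _ "length U"] conjI allI impI)
  show "length U < length p"
    by (simp add: p_def)
next
  fix i assume i: "i < length U"
  have "f ((U @ [h]) ! i) < f ((U @ [h]) ! Suc i)"
    using assms(1) i unfolding sorted_wrt_iff_nth_less by auto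
  then show "f (p ! i) < f (p ! Suc i)"
    using i unfolding p_def by (cases "Suc i < length U") (auto simp: nth_append)
next
  fix i assume i: "length U \<le> i" "Suc i < length p"
  have "i - length U < Suc (i - length U)" "Suc (i - length U) < length (h # D)"
    using i unfolding p_def by auto
  then have "f ((h # D) ! Suc (i - length U)) < f ((h # D) ! (i - length U))"
    using assms(2) unfolding sorted_wrt_iff_nth_less by blast
  then show "f (p ! Suc i) < f (p ! i)"
    using i by (simp add: p_def nth_append Suc_diff_le)
qed

lemma up_down_second_above_min:
  fixes f :: "'a \<Rightarrow> 'b::linorder"
  assumes "j < length p" "\<forall>i. i < j \<longrightarrow> f (p ! i) < f (p ! Suc i)"
    "\<forall>i. j \<le> i \<longrightarrow> Suc i < length p \<longrightarrow> f (p ! Suc i) < f (p ! i)" "3 \<le> length p"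
  shows "min (f (hd p)) (f (last p)) < f (p ! 1)"
proof (cases "j = 0")
  case True
  then have "sorted_wrt (\<lambda>a b. f b < f a) p"
    using assms(3) by (subst sorted_wrt_iff_nth_Suc_transp) (auto simp: transp_def)
  then have "f (p ! (length p - 1)) < f (p ! 1)"
    using assms(4) by (auto simp: sorted_wrt_iff_nth_less)
  moreover have "p \<noteq> []"
    using assms(4) by auto
  ultimately show ?thesis
    by (simp add: last_conv_nth min.strict_coboundedI2)
next
  case False
  moreover have "p \<noteq> []"
    using assms(4) by auto
  ultimately show ?thesis
    using assms(2) by (simp add: hd_conv_nth min.strict_coboundedI1)
qed

lemma distinct_second_interior:
  assumes "distinct p" "p \<noteq> []" "hd p \<noteq> last p" "p \<noteq> [hd p, last p]"
  shows "3 \<le> length p" "p ! 1 \<in> set p - {hd p, last p}"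
proof -
  obtain a b r where p: "p = a # b # r"
    using assms(2,3) by (cases p rule: remdups_adj.cases) auto
  moreover have "r \<noteq> []"
    using assms(4) unfolding p by auto
  ultimately show "3 \<le> length p" "p ! 1 \<in> set p - {hd p, last p}"
    using assms(1) by (auto simp: Suc_le_eq)
qed

locale cch_customization =
  fixes V :: "'a set" and E :: "'a set set" and w :: "'a set \<Rightarrow> real"
    and \<pi> :: "nat \<Rightarrow> 'a" and L :: "('a \<times> 'a) list"
  assumes simple: "simple_graph V E"
    and weights_pos: "\<forall>e\<in>E. 0 < w e"
    and unique_shortest: "unique_shortest_paths V E w"
    and order: "vertex_order V \<pi>"
    and processing_order: "cust_order V E \<pi> L"
begin

abbreviation "rk \<equiv> rank V \<pi>"
abbreviation "S \<equiv> star_edges V E \<pi>"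
abbreviation "dI \<equiv> dist_I V E w"

section \<open>Contraction and lower walks\<close>

lemma rank_in: "v \<in> V \<Longrightarrow> rk v \<in> {1..card V}"
  using order unfolding vertex_order_def rank_def by (metis bij_betw_def inv_into_into)

lemma pi_rank: "v \<in> V \<Longrightarrow> \<pi> (rk v) = v"
  using order unfolding vertex_order_def rank_def by (metis bij_betw_def f_inv_into_f)

lemma rank_pi: "k \<in> {1..card V} \<Longrightarrow> rk (\<pi> k) = k"
  using order unfolding vertex_order_def rank_def by (metis bij_betw_def inv_into_f_f)

lemma rank_eq_iff: "u \<in> V \<Longrightarrow> v \<in> V \<Longrightarrow> rk u = rk v \<longleftrightarrow> u = v"
  using pi_rank by metis

lemma rank_le_Suc_imp_le: "u \<in> V \<Longrightarrow> rk u \<le> Suc k \<Longrightarrow> u \<noteq> \<pi> (Suc k) \<Longrightarrow> rk u \<le> k"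
  using pi_rank le_Suc_eq by metis

lemma rank_le_imp_less: "u \<in> V \<Longrightarrow> v \<in> V \<Longrightarrow> u \<noteq> v \<Longrightarrow> rk u \<le> rk v \<Longrightarrow> rk u < rk v"
  using rank_eq_iff le_neq_implies_less by blast

lemma edge_endpoints: "{x, y} \<in> E \<Longrightarrow> x \<in> V \<and> y \<in> V"
  using simple unfolding simple_graph_def by (auto simp: doubleton_eq_iff)

lemma walk_in_V: "walk E W \<Longrightarrow> 2 \<le> length W \<Longrightarrow> set W \<subseteq> V"
proof (induction W rule: induct_list012)
  case (3 x y zs)
  then show ?case by (cases zs) (auto dest: edge_endpoints)
qed auto

lemma core_edge_pair: "e \<in> core_edges E \<pi> k \<Longrightarrow> \<exists>x y. e = {x, y} \<and> x \<in> V \<and> y \<in> V \<and> x \<noteq> y"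
proof (induction k arbitrary: e)
  case 0
  then show ?case
    using simple unfolding simple_graph_def by auto
next
  case (Suc k)
  from Suc.prems consider "e \<in> core_edges E \<pi> k"
    | x y where "e = {x, y}" "x \<noteq> y" "{\<pi> (Suc k), x} \<in> core_edges E \<pi> k"
        "{\<pi> (Suc k), y} \<in> core_edges E \<pi> k"
    unfolding core_edges.simps contract_def by blast
  then show ?case
  proof cases
    case 2
    then show ?thesis
      using Suc.IH[OF 2(3)] Suc.IH[OF 2(4)] by (metis doubleton_eq_iff)
  qed (use Suc.IH in blast)
qed

lemma star_edge_endpoints: "{x, y} \<in> S \<Longrightarrow> x \<in> V \<and> y \<in> V \<and> x \<noteq> y"
  unfolding star_edges_def using core_edge_pair by (metis UN_E doubleton_eq_iff)

lemma contracted_walk_core_edge: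
  assumes "walk E (a # I @ [b])" "distinct (a # I @ [b])"
    and "k < rk a" "k < rk b" "\<forall>u\<in>set I. rk u \<le> k"
  shows "{a, b} \<in> core_edges E \<pi> k"
  using assms
proof (induction k arbitrary: a b I)
  case 0
  have "u \<notin> set I" for u
    using walk_in_V[OF "0.prems"(1)] rank_in[of u] "0.prems"(5) by force
  then show ?case
    using "0.prems"(1) by (cases I) auto
next
  case (Suc k)
  define v where "v = \<pi> (Suc k)"
  have "rk v = Suc k"
    using rank_in[of a] walk_in_V[OF Suc.prems(1)] Suc.prems(3) rank_pi unfolding v_def by auto
  then have "v \<noteq> a" "v \<noteq> b"
    using Suc.prems(3,4) by auto
  have below: "rk u \<le> k" if "u \<in> set I" "u \<noteq> v" for u
    using rank_le_Suc_imp_le[of u k] that Suc.prems(5) walk_in_V[OF Suc.prems(1)] unfolding v_def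
    by auto
  show ?case
  proof (cases "v \<in> set I")
    case False
    then have "\<forall>u\<in>set I. rk u \<le> k"
      using below by blast
    then have "{a, b} \<in> core_edges E \<pi> k"
      using Suc.IH[OF Suc.prems(1,2)] Suc.prems(3,4) by simp
    then show ?thesis
      using \<open>v \<noteq> a\<close> \<open>v \<noteq> b\<close> by (simp add: v_def[symmetric] contract_def)
  next
    case True
    then obtain I1 I2 where I: "I = I1 @ v # I2"
      by (meson split_list)
    have walks: "walk E (a # I1 @ [v])" "walk E (v # I2 @ [b])"
      using Suc.prems(1) walk_append_Cons[of E "a # I1" v "I2 @ [b]"] unfolding I by simp_all
    have distinct: "distinct (a # I1 @ [v])" "distinct (v # I2 @ [b])"
      using Suc.prems(2) unfolding I by auto
    have "\<forall>u\<in>set I1. rk u \<le> k" "\<forall>u\<in>set I2. rk u \<le> k"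
      using below Suc.prems(2) unfolding I by auto
    then have "{a, v} \<in> core_edges E \<pi> k" "{v, b} \<in> core_edges E \<pi> k"
      using Suc.IH[OF walks(1) distinct(1)] Suc.IH[OF walks(2) distinct(2)] Suc.prems(3,4)
        \<open>rk v = Suc k\<close> by auto
    moreover have "a \<noteq> b"
      using Suc.prems(2) by simp
    ultimately show ?thesis
      unfolding v_def core_edges.simps contract_def by (auto simp: insert_commute)
  qed
qed

definition lower_walk :: "'a \<Rightarrow> 'a list \<Rightarrow> 'a \<Rightarrow> bool" where
  "lower_walk a I b \<longleftrightarrow> walk E (a # I @ [b]) \<and> (\<forall>u\<in>set I. rk u < rk a \<and> rk u < rk b)"

lemma lower_walk_in_V: "lower_walk a I b \<Longrightarrow> set (a # I @ [b]) \<subseteq> V"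
  unfolding lower_walk_def by (rule walk_in_V) auto

lemma lower_walk_rev: "lower_walk a I b \<Longrightarrow> lower_walk b (rev I) a"
  using walk_rev[of E "a # I @ [b]"] by (auto simp: lower_walk_def)

lemma lower_walk_join:
  "lower_walk a I z \<Longrightarrow> lower_walk z J b \<Longrightarrow> rk z < rk a \<Longrightarrow> rk z < rk b \<Longrightarrow>
   lower_walk a (I @ z # J) b"
  using walk_append_Cons[of E "a # I" z "J @ [b]"] by (fastforce simp: lower_walk_def)

lemma lower_walk_split_max:
  assumes "lower_walk a I b" "distinct I" "I \<noteq> []"
  obtains I1 z I2 where "I = I1 @ z # I2" "lower_walk a I1 z" "lower_walk z I2 b"
    "rk z < rk a" "rk z < rk b"
proof -
  obtain I1 z I2 where I: "I = I1 @ z # I2" "\<forall>u\<in>set I. rk u \<le> rk z"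
    using split_at_max[OF assms(3)] by metis
  have "rk u < rk z" if "u \<in> set I1 \<union> set I2" for u
  proof (rule rank_le_imp_less)
    show "u \<in> V" "z \<in> V" "u \<noteq> z" "rk u \<le> rk z"
      using that assms(2) lower_walk_in_V[OF assms(1)] I unfolding I(1) by auto
  qed
  then show thesis
    using that[OF I(1)] assms(1) walk_append_Cons[of E "a # I1" z "I2 @ [b]"]
    unfolding lower_walk_def I(1) by auto
qed

lemma lower_path_star_edge:
  assumes "lower_walk a I b" "distinct (a # I @ [b])"
  shows "{a, b} \<in> S"
proof -
  define k where "k = min (rk a) (rk b) - 1"
  have "rk a \<in> {1..card V}" "rk b \<in> {1..card V}"
    using lower_walk_in_V[OF assms(1)] rank_in by auto
  then have "Suc k \<in> {1..card V}"
    unfolding k_def by (auto simp: min_def)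
  moreover have "{a, b} \<in> core_edges E \<pi> k"
    using assms \<open>rk a \<in> _\<close> \<open>rk b \<in> _\<close> unfolding lower_walk_def k_def
    by (intro contracted_walk_core_edge) auto
  ultimately show ?thesis
    unfolding star_edges_def by force
qed

section \<open>Shortest paths\<close>

lemma path_from_to_iff:
  "path_from_to V E s t P \<longleftrightarrow> P \<noteq> [] \<and> distinct P \<and> set P \<subseteq> V \<and> walk E P \<and> hd P = s \<and> last P = t"
  unfolding path_from_to_def is_path_def walk_def by blast

lemma path_from_to_rev: "path_from_to V E s t P \<Longrightarrow> path_from_to V E t s (rev P)"
  unfolding path_from_to_iff by (auto simp: hd_rev last_rev)

lemma dist_le_wlen:
  assumes "walk E W" "set W \<subseteq> V" "W \<noteq> []"
  shows "dI (hd W) (last W) \<le> wlen w W"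
proof -
  obtain P where P: "walk E P" "P \<noteq> []" "distinct P" "set P \<subseteq> set W" "hd P = hd W"
    "last P = last W" "wlen w P \<le> wlen w W"
    using walk_to_path[OF weights_pos assms(1,3)] .
  then have "wlen w P \<in> {wlen w p | p. path_from_to V E (hd W) (last W) p}"
    using assms(2) unfolding path_from_to_iff by auto
  moreover have "bdd_below {wlen w p | p. path_from_to V E (hd W) (last W) p}"
    by (rule bdd_belowI[of _ 0]) (auto simp: path_from_to_iff intro: wlen_walk_nonneg[OF weights_pos])
  ultimately have "dI (hd W) (last W) \<le> wlen w P"
    unfolding dist_I_def by (rule cInf_lower)
  with P(7) show ?thesis by linarith
qed

lemma shortest_walk_distinct:
  assumes "walk E W" "set W \<subseteq> V" "W \<noteq> []" "wlen w W = dI (hd W) (last W)"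
  shows "distinct W"
proof (rule ccontr)
  assume "\<not> distinct W"
  then obtain W' where "walk E W'" "W' \<noteq> []" "set W' \<subseteq> set W" "hd W' = hd W" "last W' = last W"
    "wlen w W' < wlen w W"
    using walk_shortcut[OF weights_pos assms(1)] by metis
  then show False
    using dist_le_wlen[of W'] assms(2,4) by force
qed

definition shortest_path :: "'a \<Rightarrow> 'a \<Rightarrow> 'a list \<Rightarrow> bool" where
  "shortest_path s t P \<longleftrightarrow> path_from_to V E s t P \<and> wlen w P = dI s t"

lemma shortest_path_exists: "s \<in> V \<Longrightarrow> t \<in> V \<Longrightarrow> \<exists>P. shortest_path s t P"
  using unique_shortest unfolding unique_shortest_paths_def shortest_path_def by blast

lemma dist_sym: "dI s t = dI t s"
proof -
  have "{wlen w p | p. path_from_to V E s t p} \<subseteq> {wlen w p | p. path_from_to V E t s p}" for s t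
  proof
    fix x assume "x \<in> {wlen w p | p. path_from_to V E s t p}"
    then obtain p where "x = wlen w p" "path_from_to V E s t p"
      by blast
    then show "x \<in> {wlen w p | p. path_from_to V E t s p}"
      using path_from_to_rev[of s t p] wlen_rev[of w p] by (auto intro!: exI[of _ "rev p"])
  qed
  then have "{wlen w p | p. path_from_to V E s t p} = {wlen w p | p. path_from_to V E t s p}"
    by blast
  then show ?thesis
    unfolding dist_I_def by simp
qed

lemma shortest_path_rev: "shortest_path s t P \<Longrightarrow> shortest_path t s (rev P)"
  unfolding shortest_path_def using path_from_to_rev dist_sym by simp

lemma path_from_to_endpoints: "path_from_to V E s t P \<Longrightarrow> s \<in> V \<and> t \<in> V"
  unfolding path_from_to_iff using hd_in_set last_in_set by blast

lemma dist_triangle: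
  assumes "s \<in> V" "g \<in> V" "t \<in> V"
  shows "dI s t \<le> dI s g + dI g t"
proof -
  obtain Q1 Q2 where "shortest_path s g Q1" "shortest_path g t Q2"
    using shortest_path_exists assms by blast
  moreover have "Q1 = butlast Q1 @ [g]" "Q2 = g # tl Q2"
    using calculation append_butlast_last_id list.collapse unfolding shortest_path_def path_from_to_iff
    by metis+
  ultimately obtain P1 P2 where P: "shortest_path s g (P1 @ [g])" "shortest_path g t (g # P2)"
    by metis
  have "walk E (P1 @ g # P2)"
    using P walk_append_Cons[of E P1 g P2] unfolding shortest_path_def path_from_to_iff by simp
  moreover have "set (P1 @ g # P2) \<subseteq> V" "hd (P1 @ g # P2) = s" "last (P1 @ g # P2) = t"
    using P unfolding shortest_path_def path_from_to_iff by (auto simp: hd_append)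
  moreover have "wlen w (P1 @ g # P2) = dI s g + dI g t"
    using P wlen_append_Cons[of w P1 g P2] unfolding shortest_path_def by simp
  ultimately show ?thesis
    using dist_le_wlen[of "P1 @ g # P2"] by simp
qed

lemma shortest_path_split:
  assumes "shortest_path s t (A @ g # B)"
  shows "shortest_path s g (A @ [g])" "shortest_path g t (g # B)"
proof -
  have paths: "path_from_to V E s g (A @ [g])" "path_from_to V E g t (g # B)"
    using assms walk_append_Cons[of E A g B]
    unfolding shortest_path_def path_from_to_iff by (auto simp: hd_append)
  then have "dI s g \<le> wlen w (A @ [g])" "dI g t \<le> wlen w (g # B)"
    using dist_le_wlen unfolding path_from_to_iff by force+
  moreover have "dI s t \<le> dI s g + dI g t"
    using paths by (meson dist_triangle path_from_to_endpoints)
  moreover have "wlen w (A @ [g]) + wlen w (g # B) = dI s t"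
    using assms wlen_append_Cons[of w A g B] unfolding shortest_path_def by simp
  ultimately show "shortest_path s g (A @ [g])" "shortest_path g t (g # B)"
    using paths unfolding shortest_path_def by linarith+
qed

section \<open>The basic customization\<close>

definition cust_prefix :: "nat \<Rightarrow> 'a set \<Rightarrow> ereal" where
  "cust_prefix i = basic_customization V E \<pi> (take i L) (initial_metric E w)"

abbreviation "mC \<equiv> cust_prefix (length L)"

lemma cust_prefix_0: "cust_prefix 0 = initial_metric E w"
  by (simp add: cust_prefix_def basic_customization_def)

lemma cust_prefix_Suc: "i < length L \<Longrightarrow> cust_prefix (Suc i) = cust_step V E \<pi> (cust_prefix i) (L ! i)"
  unfolding cust_prefix_def basic_customization_def by (simp add: take_Suc_conv_app_nth)

lemma cust_step_other: "e \<noteq> {x, y} \<Longrightarrow> cust_step V E \<pi> m (x, y) e = m e"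
  by (simp add: cust_step_def)

lemma cust_step_le: "cust_step V E \<pi> m xy e \<le> m e"
  by (cases xy) (simp add: cust_step_def)

lemma cust_step_edge:
  "cust_step V E \<pi> m (x, y) {x, y} =
     min (m {x, y}) (INF z \<in> {z. rk z < rk x \<and> rk z < rk y \<and> {x, z} \<in> S \<and> {z, y} \<in> S}.
       m {x, z} + m {z, y})"
  by (simp add: cust_step_def)

lemma cust_step_triangle:
  "rk z < rk x \<Longrightarrow> rk z < rk y \<Longrightarrow> {x, z} \<in> S \<Longrightarrow> {z, y} \<in> S \<Longrightarrow>
   cust_step V E \<pi> m (x, y) {x, y} \<le> m {x, z} + m {z, y}"
  unfolding cust_step_edge by (rule min.coboundedI2) (rule INF_lower, simp)

lemma cust_step_edge_cases:
  obtains "cust_step V E \<pi> m (x, y) {x, y} = m {x, y}"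
  | z where "rk z < rk x" "rk z < rk y" "{x, z} \<in> S" "{z, y} \<in> S"
    "cust_step V E \<pi> m (x, y) {x, y} = m {x, z} + m {z, y}"
proof -
  let ?Z = "{z. rk z < rk x \<and> rk z < rk y \<and> {x, z} \<in> S \<and> {z, y} \<in> S}"
  consider "?Z = {}" | "?Z \<noteq> {}" by blast
  then show thesis
  proof cases
    case 1
    then show thesis
      using that(1) cust_step_edge[of m x y] unfolding 1 by (simp add: top_ereal_def)
  next
    case 2
    have "finite ?Z"
      using finite_subset[of ?Z V] star_edge_endpoints simple unfolding simple_graph_def by blast
    with 2 have "(INF z\<in>?Z. m {x, z} + m {z, y}) \<in> (\<lambda>z. m {x, z} + m {z, y}) ` ?Z"
      by (simp add: cInf_eq_Min)
    then show thesis
      using that cust_step_edge[of m x y] by (auto simp: min_def split: if_splits)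
  qed
qed

lemma cust_prefix_antimono:
  assumes "i \<le> j" "j \<le> length L"
  shows "cust_prefix j e \<le> cust_prefix i e"
  using assms(1)
proof (induction j rule: dec_induct)
  case (step j)
  then have "cust_prefix (Suc j) e \<le> cust_prefix j e"
    using assms(2) cust_prefix_Suc[of j] cust_step_le by simp
  with step.IH show ?case
    by simp
qed simp

lemma cust_prefix_nonneg: "i \<le> length L \<Longrightarrow> 0 \<le> cust_prefix i e"
proof (induction i arbitrary: e)
  case 0
  then show ?case
    using weights_pos by (simp add: cust_prefix_0 initial_metric_def less_imp_le)
next
  case (Suc i)
  obtain x y where xy: "L ! i = (x, y)"
    by fastforce
  have "0 \<le> cust_prefix i e'" for e'
    using Suc by simp
  then have "0 \<le> cust_step V E \<pi> (cust_prefix i) (x, y) e"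
    by (cases "e = {x, y}")
      (simp_all add: cust_step_edge cust_step_other INF_greatest add_nonneg_nonneg)
  then show ?case
    using Suc.prems cust_prefix_Suc[of i] xy by simp
qed

lemma edge_index:
  assumes "e \<in> S"
  obtains i x y where "i < length L" "L ! i = (x, y)" "e = {x, y}"
proof -
  have "e \<in> set (map (\<lambda>(x, y). {x, y}) L)"
    using processing_order assms unfolding cust_order_def by simp
  then obtain i where "i < length L" "e = (\<lambda>(x, y). {x, y}) (L ! i)"
    unfolding in_set_conv_nth by auto
  then show thesis
    using that by (cases "L ! i") auto
qed

lemma cust_prefix_stable:
  assumes "i < length L" "L ! i = (x, y)" "Suc i \<le> j" "j \<le> length L"
  shows "cust_prefix j {x, y} = cust_prefix (Suc i) {x, y}"
  using assms(3,4)
proof (induction j rule: dec_induct)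
  case (step j)
  obtain x' y' where xy': "L ! j = (x', y')"
    by fastforce
  have "j \<noteq> i" "j < length L"
    using step by auto
  then have "map (\<lambda>(x, y). {x, y}) L ! j \<noteq> map (\<lambda>(x, y). {x, y}) L ! i"
    using processing_order assms(1) unfolding cust_order_def distinct_conv_nth by simp
  then have "{x, y} \<noteq> {x', y'}"
    using assms(1,2) xy' \<open>j < length L\<close> by simp
  then show ?case
    using step cust_prefix_Suc[of j] xy' cust_step_other by simp
qed simp

lemma cust_prefix_final_before:
  assumes "i < length L" "L ! i = (x, y)" "{c, d} \<in> S" "min (rk c) (rk d) < min (rk x) (rk y)"
  shows "cust_prefix i {c, d} = mC {c, d}"
proof -
  obtain i' x' y' where i': "i' < length L" "L ! i' = (x', y')" "{c, d} = {x', y'}"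
    using edge_index assms(3) by blast
  have "i' < i"
  proof (rule ccontr)
    assume "\<not> i' < i"
    then have "map (\<lambda>(x, y). min (rk x) (rk y)) L ! i \<le> map (\<lambda>(x, y). min (rk x) (rk y)) L ! i'"
      using processing_order i'(1) unfolding cust_order_def by (intro sorted_nth_mono) auto
    then have "min (rk x) (rk y) \<le> min (rk x') (rk y')"
      using assms(1,2) i'(1,2) by simp
    moreover have "min (rk x') (rk y') = min (rk c) (rk d)"
      using i'(3) by (auto simp: doubleton_eq_iff)
    ultimately show False
      using assms(4) by linarith
  qed
  have "cust_prefix i {x', y'} = cust_prefix (Suc i') {x', y'}"
    using cust_prefix_stable[OF i'(1,2), of i] \<open>i' < i\<close> assms(1) by simp
  moreover have "mC {x', y'} = cust_prefix (Suc i') {x', y'}"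
    using cust_prefix_stable[OF i'(1,2), of "length L"] i'(1) by simp
  ultimately show ?thesis
    using i'(3) by simp
qed

definition realized :: "('a set \<Rightarrow> ereal) \<Rightarrow> 'a \<Rightarrow> 'a \<Rightarrow> bool" where
  "realized m x y \<longleftrightarrow> (\<exists>I. lower_walk x I y \<and> m {x, y} = ereal (wlen w (x # I @ [y])))"

lemma realized_sym: "realized m x y \<Longrightarrow> realized m y x"
proof -
  assume "realized m x y"
  then obtain I where "lower_walk x I y" "m {x, y} = ereal (wlen w (x # I @ [y]))"
    unfolding realized_def by blast
  moreover have "rev (x # I @ [y]) = y # rev I @ [x]"
    by simp
  ultimately show ?thesis
    unfolding realized_def using lower_walk_rev wlen_rev[of w "x # I @ [y]"]
    by (metis insert_commute)
qed

lemma cust_prefix_realized: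
  "i \<le> length L \<Longrightarrow> {x, y} \<in> S \<Longrightarrow> cust_prefix i {x, y} \<noteq> \<infinity> \<Longrightarrow> realized (cust_prefix i) x y"
proof (induction i arbitrary: x y)
  case 0
  then have "{x, y} \<in> E"
    by (simp add: cust_prefix_0 initial_metric_def split: if_splits)
  then show ?case
    unfolding realized_def lower_walk_def by (intro exI[of _ "[]"]) (simp add: cust_prefix_0 initial_metric_def)
next
  case (Suc i)
  obtain p q where pq: "L ! i = (p, q)"
    by fastforce
  have i: "i < length L" and step: "cust_prefix (Suc i) = cust_step V E \<pi> (cust_prefix i) (p, q)"
    using Suc.prems(1) cust_prefix_Suc pq by simp_all
  show ?case
  proof (cases "{x, y} = {p, q}")
    case False
    then show ?thesis
      using Suc step cust_step_other unfolding realized_def by simp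
  next
    case True
    have finite: "cust_prefix (Suc i) {p, q} \<noteq> \<infinity>"
      using True Suc.prems(3) by simp
    have "realized (cust_prefix (Suc i)) p q"
    proof (cases rule: cust_step_edge_cases[of "cust_prefix i" p q])
      case 1
      then show ?thesis
        using Suc.IH[of p q] Suc.prems(2) True i finite step unfolding realized_def by simp
    next
      case (2 z)
      then have "cust_prefix i {p, z} \<noteq> \<infinity>" "cust_prefix i {z, q} \<noteq> \<infinity>"
        using finite step cust_prefix_nonneg i by (auto simp: ereal_plus_eq_PInfty)
      then obtain I J where "lower_walk p I z" "lower_walk z J q"
        "cust_prefix i {p, z} = ereal (wlen w (p # I @ [z]))"
        "cust_prefix i {z, q} = ereal (wlen w (z # J @ [q]))"
        using Suc.IH[of p z] Suc.IH[of z q] 2 i unfolding realized_def by auto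
      then show ?thesis
        unfolding realized_def using 2 step lower_walk_join wlen_append_Cons[of w "p # I" z "J @ [q]"]
        by (intro exI[of _ "I @ z # J"]) auto
    qed
    then show ?thesis
      using True realized_sym by (auto simp: doubleton_eq_iff)
  qed
qed

lemma dist_le_mC: "{x, y} \<in> S \<Longrightarrow> ereal (dI x y) \<le> mC {x, y}"
proof (cases "mC {x, y} = \<infinity>")
  case False
  assume "{x, y} \<in> S"
  then obtain I where "lower_walk x I y" "mC {x, y} = ereal (wlen w (x # I @ [y]))"
    using cust_prefix_realized False unfolding realized_def by blast
  then show ?thesis
    using dist_le_wlen[of "x # I @ [y]"] lower_walk_in_V unfolding lower_walk_def by auto
qed simp

text \<open>When \<open>{a, b}\<close> is processed, the edges of its lower triangles already have their final values.\<close>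
lemma mC_lower_triangle:
  assumes "{a, b} \<in> S" "{a, z} \<in> S" "{z, b} \<in> S" "rk z < rk a" "rk z < rk b"
  shows "mC {a, b} \<le> mC {a, z} + mC {z, b}"
proof -
  obtain i x y where i: "i < length L" "L ! i = (x, y)" "{a, b} = {x, y}"
    using edge_index assms(1) by blast
  have xy: "rk z < rk x" "rk z < rk y" "{x, z} \<in> S" "{z, y} \<in> S"
    "mC {x, z} + mC {z, y} = mC {a, z} + mC {z, b}"
    using assms i(3) by (auto simp: doubleton_eq_iff insert_commute add.commute)
  have "mC {a, b} \<le> cust_prefix (Suc i) {x, y}"
    using cust_prefix_antimono i by simp
  also have "\<dots> \<le> cust_prefix i {x, z} + cust_prefix i {z, y}"
    using cust_prefix_Suc[OF i(1)] i(2) cust_step_triangle[OF xy(1-4)] by simp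
  also have "\<dots> = mC {x, z} + mC {z, y}"
    using cust_prefix_final_before[OF i(1,2)] xy(1-4) by simp
  finally show ?thesis
    using xy(5) by simp
qed

lemma mC_le_lower_path:
  "lower_walk a I b \<Longrightarrow> distinct (a # I @ [b]) \<Longrightarrow> mC {a, b} \<le> ereal (wlen w (a # I @ [b]))"
proof (induction "length I" arbitrary: a I b rule: less_induct)
  case less
  show ?case
  proof (cases "I = []")
    case True
    then have "cust_prefix 0 {a, b} = ereal (wlen w (a # I @ [b]))"
      using less.prems(1) by (simp add: lower_walk_def cust_prefix_0 initial_metric_def)
    then show ?thesis
      using cust_prefix_antimono[of 0 "length L" "{a, b}"] by simp
  next
    case False
    obtain I1 z I2 where I: "I = I1 @ z # I2" "lower_walk a I1 z" "lower_walk z I2 b"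
      "rk z < rk a" "rk z < rk b"
      using lower_walk_split_max[OF less.prems(1)] less.prems(2) False by auto
    have distinct: "distinct (a # I1 @ [z])" "distinct (z # I2 @ [b])"
      using less.prems(2) unfolding I(1) by auto
    have "mC {a, b} \<le> mC {a, z} + mC {z, b}"
      using mC_lower_triangle lower_path_star_edge less.prems I distinct by blast
    also have "\<dots> \<le> ereal (wlen w (a # I1 @ [z])) + ereal (wlen w (z # I2 @ [b]))"
      using less.hyps I distinct by (intro add_mono) auto
    also have "\<dots> = ereal (wlen w (a # I @ [b]))"
      using wlen_append_Cons[of w "a # I1" z "I2 @ [b]"] unfolding I(1) by simp
    finally show ?thesis .
  qed
qed

section \<open>Correct edges and up-down paths\<close>

definition correct_edge :: "'a \<Rightarrow> 'a \<Rightarrow> bool" where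
  "correct_edge a b \<longleftrightarrow> {a, b} \<in> S \<and> mC {a, b} = ereal (dI a b)"

lemma correct_edge_sym: "correct_edge a b \<Longrightarrow> correct_edge b a"
  unfolding correct_edge_def using dist_sym by (simp add: insert_commute)

lemma shortest_lower_path_correct:
  assumes "lower_walk a I b" "shortest_path a b (a # I @ [b])"
  shows "correct_edge a b"
proof -
  have "distinct (a # I @ [b])"
    using assms(2) unfolding shortest_path_def path_from_to_iff by blast
  then have "{a, b} \<in> S" "mC {a, b} \<le> ereal (wlen w (a # I @ [b]))"
    using lower_path_star_edge mC_le_lower_path assms(1) by auto
  moreover have "wlen w (a # I @ [b]) = dI a b"
    using assms(2) unfolding shortest_path_def by simp
  ultimately show ?thesis
    unfolding correct_edge_def using dist_le_mC order_antisym by metis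
qed

lemma shortest_path_below_correct:
  assumes "shortest_path g t (g # B @ [t])" "\<forall>u\<in>set B. rk u \<le> rk g" "rk g < rk t"
  shows "correct_edge g t"
proof -
  have "distinct (g # B @ [t])" "set (g # B @ [t]) \<subseteq> V" "walk E (g # B @ [t])"
    using assms(1) unfolding shortest_path_def path_from_to_iff by auto
  then have "rk u < rk g" if "u \<in> set B" for u
    using rank_le_imp_less[of u g] that assms(2) by auto
  then have "\<forall>u\<in>set B. rk u < rk g \<and> rk u < rk t"
    using assms(3) by (meson order.strict_trans)
  then have "lower_walk g B t"
    using \<open>walk E (g # B @ [t])\<close> unfolding lower_walk_def by blast
  then show ?thesis
    using assms(1) by (rule shortest_lower_path_correct)
qed

definition correct_up_path :: "'a \<Rightarrow> 'a list \<Rightarrow> 'a \<Rightarrow> bool" where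
  "correct_up_path s U t \<longleftrightarrow> sorted_wrt (\<lambda>a b. rk a < rk b) (U @ [t]) \<and> hd (U @ [t]) = s \<and>
     (\<forall>(a, b)\<in>set (steps (U @ [t])). correct_edge a b) \<and> mlen mC (U @ [t]) = ereal (dI s t)"

lemma correct_up_path_snoc:
  assumes "correct_up_path s U g" "correct_edge g t" "\<forall>u\<in>set (U @ [g]). rk u < rk t"
    and "dI s g + dI g t = dI s t"
  shows "correct_up_path s (U @ [g]) t"
proof -
  have "sorted_wrt (\<lambda>a b. rk a < rk b) ((U @ [g]) @ [t])"
    using assms(1,3) unfolding correct_up_path_def by (simp add: sorted_wrt_append)
  moreover have "hd ((U @ [g]) @ [t]) = s"
    using assms(1) unfolding correct_up_path_def by (cases U) auto
  moreover have "\<forall>(a, b)\<in>set (steps ((U @ [g]) @ [t])). correct_edge a b"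
    using assms(1,2) steps_snoc[of "U @ [g]" t] unfolding correct_up_path_def by auto
  moreover have "mlen mC ((U @ [g]) @ [t]) = ereal (dI s t)"
    using assms(1,2,4) mlen_snoc[of "U @ [g]" mC t] unfolding correct_up_path_def correct_edge_def
    by simp
  ultimately show ?thesis
    unfolding correct_up_path_def by blast
qed

text \<open>Cutting a shortest path at its highest interior vertex \<open>g\<close> leaves a lower path from \<open>g\<close>
  to the top \<open>t\<close>, whose shortcut is correct; recursion on the part before \<open>g\<close> climbs the rest.\<close>
lemma up_path_of_shortest_path:
  assumes "shortest_path s t P" "\<forall>u\<in>set P. rk u \<le> rk t"
  obtains U where "correct_up_path s U t" "set U \<subseteq> set (butlast P)"
  using assms
proof (induction "length P" arbitrary: t P thesis rule: less_induct)
  case less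
  have P: "P = butlast P @ [t]" "distinct P" "hd P = s" "set P \<subseteq> V"
    using less.prems(2) unfolding shortest_path_def path_from_to_iff by auto
  show ?case
  proof (cases "butlast P = []")
    case True
    then show ?thesis
      using less.prems P by (intro less.prems(1)[of "[]"]) (auto simp: shortest_path_def correct_up_path_def)
  next
    case False
    then obtain A g B where ABg: "butlast P = A @ g # B" "\<forall>u\<in>set (butlast P). rk u \<le> rk g"
      using split_at_max by metis
    have P': "P = A @ g # (B @ [t])"
      using P(1) ABg(1) by simp
    have shortest: "shortest_path s g (A @ [g])" "shortest_path g t (g # B @ [t])"
      using shortest_path_split less.prems(2) unfolding P' by blast+
    have "g \<in> V" "t \<in> V" "g \<noteq> t" "rk g \<le> rk t"
      using less.prems(3) P(2,4) unfolding P' by auto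
    then have gt: "rk g < rk t"
      by (rule rank_le_imp_less)
    have correct: "correct_edge g t"
      using shortest(2) ABg gt unfolding ABg(1) by (intro shortest_path_below_correct) auto
    have shorter: "length (A @ [g]) < length P"
      unfolding P' by simp
    have ranks: "\<forall>u\<in>set (A @ [g]). rk u \<le> rk g"
      using ABg unfolding ABg(1) by simp
    obtain U where U: "correct_up_path s U g" "set U \<subseteq> set A"
      by (rule less.hyps[OF shorter _ shortest(1) ranks]) simp
    have "\<forall>u\<in>set (U @ [g]). rk u < rk t"
      using U(2) ranks gt by fastforce
    moreover have "dI s g + dI g t = dI s t"
      using shortest less.prems(2) wlen_append_Cons[of w A g "B @ [t]"]
      unfolding P' shortest_path_def by simp
    ultimately show ?thesis
      using correct_up_path_snoc[OF U(1) correct] U(2) ABg(1)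
      by (intro less.prems(1)[of "U @ [g]"]) auto
  qed
qed

lemma join_correct_up_paths:
  assumes up1: "correct_up_path s U1 h" and up2: "correct_up_path t U2 h"
    and disjoint: "set U1 \<inter> set U2 = {}" and V: "set (U1 @ h # U2) \<subseteq> V"
  defines "p \<equiv> U1 @ h # rev U2"
  shows "up_down_path V E \<pi> p" "hd p = s" "last p = t" "\<forall>(a, b)\<in>set (steps p). correct_edge a b"
    "mlen mC p = ereal (dI s h) + ereal (dI t h)"
proof -
  have sorted: "sorted_wrt (\<lambda>a b. rk a < rk b) (U1 @ [h])" "sorted_wrt (\<lambda>a b. rk a < rk b) (U2 @ [h])"
    using up1 up2 unfolding correct_up_path_def by simp_all
  then have down: "sorted_wrt (\<lambda>a b. rk b < rk a) (h # rev U2)"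
    using sorted_wrt_rev[of "\<lambda>a b. rk b < rk a" "U2 @ [h]"] by simp
  have steps_p: "steps p = steps (U1 @ [h]) @ rev (map prod.swap (steps (U2 @ [h])))"
    using steps_append_Cons[of U1 h "rev U2"] steps_rev[of "U2 @ [h]"] unfolding p_def by simp
  show correct: "\<forall>(a, b)\<in>set (steps p). correct_edge a b"
    using up1 up2 correct_edge_sym unfolding steps_p correct_up_path_def by auto
  have "distinct p"
    using sorted_wrt_less_imp_distinct[OF sorted(1)] sorted_wrt_less_imp_distinct[OF sorted(2)] disjoint
    unfolding p_def by auto
  moreover have "set p \<subseteq> V"
    using V unfolding p_def by auto
  moreover have "\<forall>(a, b)\<in>set (steps p). {a, b} \<in> S"
    using correct unfolding correct_edge_def by auto
  ultimately show "up_down_path V E \<pi> p"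
    unfolding up_down_path_def is_path_def p_def
    using up_down_ranks_append[OF sorted(1) down] by auto
  show "hd p = s"
    using up1 unfolding correct_up_path_def p_def by (cases U1) auto
  show "last p = t"
    using up2 unfolding correct_up_path_def p_def by (cases U2) (auto simp: last_rev)
  show "mlen mC p = ereal (dI s h) + ereal (dI t h)"
    using up1 up2 mlen_append_Cons[of mC U1 h "rev U2"] mlen_rev[of mC "U2 @ [h]"]
    unfolding p_def correct_up_path_def by simp
qed

lemma correct_up_down_path_exists:
  assumes "s \<in> V" "t \<in> V"
  obtains p where "up_down_path V E \<pi> p" "hd p = s" "last p = t"
    "\<forall>(a, b)\<in>set (steps p). correct_edge a b" "mlen mC p = ereal (dI s t)"
proof -
  obtain P where P: "shortest_path s t P"
    using shortest_path_exists assms by blast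
  then obtain A h B where AhB: "P = A @ h # B" "\<forall>u\<in>set P. rk u \<le> rk h"
    using split_at_max unfolding shortest_path_def path_from_to_iff by metis
  have shortest: "shortest_path s h (A @ [h])" "shortest_path t h (rev B @ [h])"
    using shortest_path_split[of s t A h B] shortest_path_rev[of h t "h # B"] P
    unfolding AhB(1) by auto
  obtain U1 where "correct_up_path s U1 h" "set U1 \<subseteq> set A"
    using up_path_of_shortest_path[OF shortest(1)] AhB by auto
  moreover obtain U2 where "correct_up_path t U2 h" "set U2 \<subseteq> set B"
    using up_path_of_shortest_path[OF shortest(2)] AhB by auto
  moreover have "distinct (A @ h # B)" "set (A @ h # B) \<subseteq> V"
    using P unfolding AhB(1) shortest_path_def path_from_to_iff by auto
  ultimately have "set U1 \<inter> set U2 = {}" "set (U1 @ h # U2) \<subseteq> V"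
    and joined: "correct_up_path s U1 h" "correct_up_path t U2 h"
    by auto
  moreover have "dI s h + dI t h = dI s t"
    using shortest_path_split[of s t A h B] P dist_sym wlen_append_Cons[of w A h B]
    unfolding AhB(1) shortest_path_def by simp
  ultimately show thesis
    using that join_correct_up_paths[OF joined] by simp
qed

lemma shortest_path_unique: "shortest_path s t P \<Longrightarrow> shortest_path s t Q \<Longrightarrow> P = Q"
  using unique_shortest path_from_to_endpoints
  unfolding unique_shortest_paths_def shortest_path_def by metis

text \<open>Replacing every edge of a path in \<open>G*\<close> by a lower walk realizing its value.\<close>
lemma expand_finite_mlen:
  assumes "p \<noteq> []" "set p \<subseteq> V" "\<forall>(a, b)\<in>set (steps p). {a, b} \<in> S" "mlen mC p \<noteq> \<infinity>"
  obtains W where "walk E W" "set W \<subseteq> V" "W \<noteq> []" "hd W = hd p" "last W = last p"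
    "set p \<subseteq> set W" "ereal (wlen w W) = mlen mC p"
  using assms
proof (induction p arbitrary: thesis rule: induct_list012)
  case (2 x)
  show ?case
    by (rule "2.prems"(1)[of "[x]"]) (use "2.prems"(3) in auto)
next
  case (3 x y zs)
  have nonneg: "0 \<le> mC e" for e
    using cust_prefix_nonneg by simp
  then have "0 \<le> mC {x, y}" "0 \<le> mlen mC (y # zs)"
    using mlen_nonneg[of mC] by auto
  then have finite: "mC {x, y} \<noteq> \<infinity>" "mlen mC (y # zs) \<noteq> \<infinity>"
    using "3.prems"(5) by auto
  obtain I where I: "lower_walk x I y" "mC {x, y} = ereal (wlen w (x # I @ [y]))"
    using cust_prefix_realized[OF le_refl _ finite(1)] "3.prems"(4) unfolding realized_def by auto
  obtain W where W: "walk E W" "set W \<subseteq> V" "W \<noteq> []" "hd W = y" "last W = last (y # zs)"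
    "set (y # zs) \<subseteq> set W" "ereal (wlen w W) = mlen mC (y # zs)"
    by (rule "3.IH"(2)) (use "3.prems"(3-5) finite(2) in auto)
  then have W': "W = y # tl W"
    by (cases W) auto
  let ?W = "(x # I) @ y # tl W"
  show ?case
  proof (rule "3.prems"(1)[of ?W])
    show "walk E ?W"
      using I(1) W(1) W' walk_append_Cons[of E "x # I" y "tl W"] unfolding lower_walk_def by simp
    show "set ?W \<subseteq> V"
      using lower_walk_in_V[OF I(1)] W(2) W' by auto
    show "ereal (wlen w ?W) = mlen mC (x # y # zs)"
      using I(2) W(7)[symmetric] W' wlen_append_Cons[of w "x # I" y "tl W"] by simp
  qed (use W W' in auto)
qed simp

lemma correct_edge_shortest_lower_path:
  assumes "correct_edge x y"
  obtains I where "lower_walk x I y" "shortest_path x y (x # I @ [y])"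
proof -
  obtain I where I: "lower_walk x I y" "mC {x, y} = ereal (wlen w (x # I @ [y]))"
    using assms cust_prefix_realized[of "length L" x y] unfolding correct_edge_def realized_def by auto
  have "wlen w (x # I @ [y]) = dI x y"
    using assms I(2) unfolding correct_edge_def by simp
  moreover have "distinct (x # I @ [y])"
    using shortest_walk_distinct[of "x # I @ [y]"] lower_walk_in_V[OF I(1)] I(1) calculation
    unfolding lower_walk_def by simp
  ultimately show thesis
    using that[OF I(1)] I(1) lower_walk_in_V[OF I(1)]
    unfolding shortest_path_def path_from_to_iff lower_walk_def by simp
qed

lemma correct_edge_unique_up_down:
  assumes xy: "correct_edge x y"
    and p: "up_down_path V E \<pi> p" "hd p = x" "last p = y" "mlen mC p = ereal (dI x y)"
  shows "p = [x, y]"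
proof (rule ccontr)
  assume "p \<noteq> [x, y]"
  obtain I where I: "lower_walk x I y" "shortest_path x y (x # I @ [y])"
    using correct_edge_shortest_lower_path[OF xy] .
  have path: "p \<noteq> []" "distinct p" "set p \<subseteq> V" "\<forall>(a, b)\<in>set (steps p). {a, b} \<in> S"
    using p(1) unfolding up_down_path_def is_path_def by auto
  obtain j where j: "j < length p" "\<forall>i. i < j \<longrightarrow> rk (p ! i) < rk (p ! Suc i)"
    "\<forall>i. j \<le> i \<longrightarrow> Suc i < length p \<longrightarrow> rk (p ! Suc i) < rk (p ! i)"
    using p(1) unfolding up_down_path_def by blast
  obtain W where W: "walk E W" "set W \<subseteq> V" "W \<noteq> []" "hd W = x" "last W = y"
    "set p \<subseteq> set W" "ereal (wlen w W) = mlen mC p"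
    using expand_finite_mlen[OF path(1,3,4)] p(2-4) by auto
  then have "shortest_path x y W"
    using shortest_walk_distinct[OF W(1-3)] p(4)
    unfolding shortest_path_def path_from_to_iff by simp
  then have "W = x # I @ [y]"
    using I(2) shortest_path_unique by blast
  have "x \<noteq> y"
    using I(2) unfolding shortest_path_def path_from_to_iff by simp
  then have long: "3 \<le> length p" and "p ! 1 \<in> set p - {x, y}"
    using distinct_second_interior[of p] path(1,2) p(2,3) \<open>p \<noteq> [x, y]\<close> by auto
  then have "p ! 1 \<in> set (x # I @ [y]) - {x, y}"
    using W(6) \<open>W = x # I @ [y]\<close> by blast
  then have "p ! 1 \<in> set I"
    by simp
  then have "rk (p ! 1) < rk x" "rk (p ! 1) < rk y"
    using I(1) unfolding lower_walk_def by auto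
  then show False
    using up_down_second_above_min[OF j long] p(2,3) by simp
qed

lemma wrong_edges_iff: "{a, b} \<in> wrong_edges V E w \<pi> mC \<longleftrightarrow> {a, b} \<in> S \<and> \<not> correct_edge a b"
proof
  assume "{a, b} \<in> wrong_edges V E w \<pi> mC"
  then obtain x y where xy: "{a, b} = {x, y}" "{x, y} \<in> S" "ereal (dI x y) \<noteq> mC {x, y}"
    unfolding wrong_edges_def by blast
  moreover have "dI x y = dI a b"
    using xy(1) dist_sym by (auto simp: doubleton_eq_iff)
  ultimately show "{a, b} \<in> S \<and> \<not> correct_edge a b"
    unfolding correct_edge_def by auto
next
  assume "{a, b} \<in> S \<and> \<not> correct_edge a b"
  then have "{a, b} \<in> S" "ereal (dI a b) \<noteq> mC {a, b}"
    unfolding correct_edge_def by auto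
  then show "{a, b} \<in> wrong_edges V E w \<pi> mC"
    unfolding wrong_edges_def by blast
qed

end

theorem mainTheorem7:
  fixes V :: "'a set" and E :: "'a set set" and w :: "'a set \<Rightarrow> real"
    and \<pi> :: "nat \<Rightarrow> 'a" and L :: "('a \<times> 'a) list"
  assumes "simple_graph V E"
    and "connected_graph V E"
    and "\<forall>e\<in>E. w e > 0"
    and "unique_shortest_paths V E w"
    and "vertex_order V \<pi>"
    and "cust_order V E \<pi> L"
  defines "mC \<equiv> basic_customization V E \<pi> L (initial_metric E w)"
  defines "R \<equiv> wrong_edges V E w \<pi> mC"
  shows "(\<forall>s\<in>V. \<forall>t\<in>V. \<exists>p. up_down_path V E \<pi> p \<and> hd p = s \<and> last p = t \<and>
             (\<forall>(a, b)\<in>set (steps p). {a, b} \<notin> R) \<and>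
             mlen mC p = ereal (dist_I V E w s t))
       \<and> (\<forall>x y. {x, y} \<in> star_edges V E \<pi> \<and> {x, y} \<notin> R \<longrightarrow>
             (\<forall>p. up_down_path V E \<pi> p \<and> hd p = x \<and> last p = y \<and>
                  mlen mC p = ereal (dist_I V E w x y) \<longrightarrow> p = [x, y]))"
proof -
  interpret c: cch_customization V E w \<pi> L
    using assms(1,3-6) by unfold_locales
  have mC: "mC = c.mC" and R: "R = wrong_edges V E w \<pi> c.mC"
    unfolding mC_def R_def c.cust_prefix_def by simp_all
  show ?thesis
  proof (intro conjI ballI allI impI)
    fix s t assume "s \<in> V" "t \<in> V"
    then obtain p where "up_down_path V E \<pi> p" "hd p = s" "last p = t"
      "\<forall>(a, b)\<in>set (steps p). c.correct_edge a b" "mlen c.mC p = ereal (dist_I V E w s t)"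
      using c.correct_up_down_path_exists by metis
    then show "\<exists>p. up_down_path V E \<pi> p \<and> hd p = s \<and> last p = t \<and>
        (\<forall>(a, b)\<in>set (steps p). {a, b} \<notin> R) \<and> mlen mC p = ereal (dist_I V E w s t)"
      unfolding mC R using c.wrong_edges_iff by fastforce
  next
    fix x y p
    assume "{x, y} \<in> star_edges V E \<pi> \<and> {x, y} \<notin> R"
      and "up_down_path V E \<pi> p \<and> hd p = x \<and> last p = y \<and> mlen mC p = ereal (dist_I V E w x y)"
    then show "p = [x, y]"
      unfolding mC R using c.wrong_edges_iff c.correct_edge_unique_up_down by blast
  qed
qed

end
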